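(* Fix $\theta,\gamma>0$ and $\beta>0$, and consider the modified GFI process described in the context. Then it is supercritical ($\overline\lambda>0$) when $\gamma>\theta$, critical ($\overline\lambda=0$) when $\gamma=\theta$, and subcritical ($\overline\lambda<0$) when $\gamma<\theta$.
   Context: The modified GFI process with parameters $(\beta,\theta,\gamma)$ has the same growth (each active vertex attaches a new active vertex by an open edge at rate $\beta$) and fragmentation (each open edge closes at rate $\gamma$) as the GFI process, but detection is attached to edges: each open edge of an active cluster independently triggers, at rate $\theta$, the isolation (inactivation) of its whole cluster (maximal set of vertices connected by open edges). In terms of sizes, an active cluster of size $n$ grows to size $n+1$ at rate $\beta n$, is isolated at rate $\theta(n-1)$, and splits into clusters of sizes $n-j$ and $j$ at rate $\gamma n/(j(j+1))$, $1\le j\le n-1$. The generator of its first moment semigroup is $\overline{\mathcal{L}}f(n)=\beta n(f(n+1)-f(n))-\theta(n-1)f(n)+\sum_{j=1}^{n-1}\frac{\gamma n}{j(j+1)}(f(j)+f(n-j)-f(n))$, and $\overline\lambda=\overline\lambda(\beta,\theta,\gamma)$ denotes its Perron root (Malthusian exponent), i.e. the real number for which there exist a positive function $\overline h$ bounded above and below by positive constants and a positive probability vector $\overline\pi$ with $\overline{\mathcal{L}}\overline h=\overline\lambda\,\overline h$ and $\overline\pi e^{t\overline{\mathcal L}}=e^{\overline\lambda t}\overline\pi$. *)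

theory Defs
  imports "HOL-Analysis.Analysis"
begin

text \<open>State space: cluster sizes n \<ge> 1 (values of functions at 0 are irrelevant).\<close>

definition mgfi_gen :: "real \<Rightarrow> real \<Rightarrow> real \<Rightarrow> (nat \<Rightarrow> real) \<Rightarrow> nat \<Rightarrow> real" where
  "mgfi_gen \<beta> \<theta> \<gamma> f n =
     \<beta> * real n * (f (n + 1) - f n) - \<theta> * (real n - 1) * f n
     + (\<Sum>j = 1..n - 1. \<gamma> * real n / (real j * (real j + 1)) * (f j + f (n - j) - f n))"

definition mgfi_kernel :: "real \<Rightarrow> real \<Rightarrow> real \<Rightarrow> nat \<Rightarrow> nat \<Rightarrow> real" where
  "mgfi_kernel \<beta> \<theta> \<gamma> n m = mgfi_gen \<beta> \<theta> \<gamma> (\<lambda>k. if k = m then 1 else 0) n"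

fun mgfi_trunc_pow :: "real \<Rightarrow> real \<Rightarrow> real \<Rightarrow> nat \<Rightarrow> nat \<Rightarrow> nat \<Rightarrow> nat \<Rightarrow> real" where
  "mgfi_trunc_pow \<beta> \<theta> \<gamma> N 0 n m = (if n = m then 1 else 0)"
| "mgfi_trunc_pow \<beta> \<theta> \<gamma> N (Suc k) n m =
     (\<Sum>l = 1..N. mgfi_trunc_pow \<beta> \<theta> \<gamma> N k n l * mgfi_kernel \<beta> \<theta> \<gamma> l m)"

definition mgfi_trunc_exp :: "real \<Rightarrow> real \<Rightarrow> real \<Rightarrow> nat \<Rightarrow> real \<Rightarrow> nat \<Rightarrow> nat \<Rightarrow> real" where
  "mgfi_trunc_exp \<beta> \<theta> \<gamma> N t n m =
     (\<Sum>k. t ^ k / fact k * mgfi_trunc_pow \<beta> \<theta> \<gamma> N k n m)"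

text \<open>First moment semigroup e^{tL}: the minimal semigroup generated by L, obtained as
  the (monotone) limit of the truncated semigroups as N \<rightarrow> \<infinity>.\<close>
definition mgfi_semigroup :: "real \<Rightarrow> real \<Rightarrow> real \<Rightarrow> real \<Rightarrow> nat \<Rightarrow> nat \<Rightarrow> real" where
  "mgfi_semigroup \<beta> \<theta> \<gamma> t n m = lim (\<lambda>N. mgfi_trunc_exp \<beta> \<theta> \<gamma> N t n m)"

definition is_perron_root :: "real \<Rightarrow> real \<Rightarrow> real \<Rightarrow> real \<Rightarrow> bool" where
  "is_perron_root \<beta> \<theta> \<gamma> lam \<longleftrightarrow>
     (\<exists>h :: nat \<Rightarrow> real. (\<exists>c C. 0 < c \<and> (\<forall>n\<ge>1. c \<le> h n \<and> h n \<le> C))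
        \<and> (\<forall>n\<ge>1. mgfi_gen \<beta> \<theta> \<gamma> h n = lam * h n))
   \<and> (\<exists>\<pi> :: nat \<Rightarrow> real. (\<forall>n\<ge>1. 0 < \<pi> n) \<and> (\<pi> has_sum 1) {1..}
        \<and> (\<forall>t\<ge>0. \<forall>m\<ge>1.
              ((\<lambda>n. \<pi> n * mgfi_semigroup \<beta> \<theta> \<gamma> t n m) has_sum (exp (lam * t) * \<pi> m)) {1..}))"

end

theory Submission
  imports Defs
begin

(* Changing the detection rate from theta to theta' adds (theta' - theta) (n - 1) h n to the
   generator, so a positive eigenfunction h with eigenvalue lam satisfies
   L_crit h n = (lam - (gamma - theta) (n - 1)) h n for the critical generator L_crit = L with
   theta = gamma.  L_crit obeys a minimum principle: a function bounded below with L_crit h <= 0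
   is minimal at n = 1.  Indeed, a cluster of size n >= 2 splits off a singleton at rate
   gamma n / 2, a fixed fraction of its total fragmentation rate gamma (n - 1); at a near-minimiser
   n of h this term is pushed up by h 1 - inf h, and L_crit h n <= 0 then forces h (n + 1) below
   the infimum.  By linearity L_crit also obeys a maximum principle.
   If lam <= 0 and theta <= gamma, then h is minimal at 1, the eigenvalue equation at n = 1,
   beta (h 2 - h 1) = lam h 1, gives lam = 0 and h 2 = h 1, and the one at n = 2 becomes
   2 beta (h 3 - h 1) = (theta - gamma) h 1, so theta = gamma.  The case lam >= 0, theta >= gamma
   is symmetric, and together the two cases settle the sign of lam. *)

lemma sum_inverse_consecutive_products:
  "(\<Sum>j = 1..k. 1 / (real j * (real j + 1))) = real k / (real k + 1)"
proof (induction k)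
  case (Suc k)
  have "(\<Sum>j = 1..Suc k. 1 / (real j * (real j + 1)))
      = real k / (real k + 1) + 1 / ((real k + 1) * (real k + 2))"
    using Suc.IH by (simp add: add_ac)
  also have "\<dots> = real (Suc k) / (real (Suc k) + 1)"
  proof -
    have "real k + 1 > 0" "real k + 2 > 0" by linarith+
    then show ?thesis by (simp add: divide_simps) (simp add: algebra_simps)
  qed
  finally show ?case .
qed simp

lemma sum_fragmentation_rates:
  assumes "n \<ge> 1"
  shows "(\<Sum>j = 1..n - 1. \<gamma> * real n / (real j * (real j + 1))) = \<gamma> * (real n - 1)"
proof -
  have "(\<Sum>j = 1..n - 1. \<gamma> * real n / (real j * (real j + 1)))
      = \<gamma> * real n * (\<Sum>j = 1..n - 1. 1 / (real j * (real j + 1)))"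
    by (simp add: sum_distrib_left)
  also have "\<dots> = \<gamma> * (real n - 1)"
    using assms sum_inverse_consecutive_products[of "n - 1"] by (simp add: of_nat_diff)
  finally show ?thesis .
qed

lemma mgfi_gen_change_detection:
  "mgfi_gen \<beta> \<theta> \<gamma> h n = mgfi_gen \<beta> \<theta>' \<gamma> h n + (\<theta>' - \<theta>) * (real n - 1) * h n"
  unfolding mgfi_gen_def by (simp add: algebra_simps)

lemma mgfi_gen_uminus: "mgfi_gen \<beta> \<theta> \<gamma> (\<lambda>k. - h k) n = - mgfi_gen \<beta> \<theta> \<gamma> h n"
proof -
  have "(\<Sum>j = 1..n - 1. \<gamma> * real n / (real j * (real j + 1)) * (- h j + - h (n - j) - - h n))
      = - (\<Sum>j = 1..n - 1. \<gamma> * real n / (real j * (real j + 1)) * (h j + h (n - j) - h n))"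
    unfolding sum_negf[symmetric] by (rule sum.cong) (simp_all add: right_diff_distrib distrib_left)
  then show ?thesis
    unfolding mgfi_gen_def by (simp add: algebra_simps)
qed

lemma mgfi_gen_at_1: "mgfi_gen \<beta> \<theta> \<gamma> h 1 = \<beta> * (h 2 - h 1)"
  unfolding mgfi_gen_def by (simp add: numeral_2_eq_2)

lemma mgfi_gen_at_2:
  "mgfi_gen \<beta> \<theta> \<gamma> h 2 = 2 * \<beta> * (h 3 - h 2) - \<theta> * h 2 + \<gamma> * (2 * h 1 - h 2)"
  unfolding mgfi_gen_def by (simp add: numeral_3_eq_3 numeral_2_eq_2)

lemma mgfi_gen_critical_lower_bound:
  assumes "\<gamma> \<ge> 0" "n \<ge> 2" and lower: "\<And>j. j \<ge> 1 \<Longrightarrow> m \<le> h j"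
  shows "\<beta> * real n * (h (n + 1) - h n) + 2 * \<gamma> * (real n - 1) * (m - h n)
           + \<gamma> * real n * (h 1 - m) / 2 \<le> mgfi_gen \<beta> \<gamma> \<gamma> h n"
proof -
  define w where "w j = \<gamma> * real n / (real j * (real j + 1))" for j
  have "w j * (2 * m - h n) + (if j = 1 then w j * (h 1 - m) else 0) \<le> w j * (h j + h (n - j) - h n)"
    if "j \<in> {1..n - 1}" for j
  proof -
    have "m \<le> h j" "m \<le> h (n - j)" using that by (auto intro: lower)
    then have "2 * m - h n + (if j = 1 then h 1 - m else 0) \<le> h j + h (n - j) - h n"
      by auto
    moreover have "w j \<ge> 0" using assms(1) unfolding w_def by simp
    ultimately show ?thesis by (auto dest: mult_left_mono simp: algebra_simps)
  qed
  then have "(\<Sum>j = 1..n - 1. w j * (2 * m - h n) + (if j = 1 then w j * (h 1 - m) else 0))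
      \<le> (\<Sum>j = 1..n - 1. w j * (h j + h (n - j) - h n))"
    by (rule sum_mono)
  moreover have "(\<Sum>j = 1..n - 1. w j * (2 * m - h n) + (if j = 1 then w j * (h 1 - m) else 0))
      = \<gamma> * (real n - 1) * (2 * m - h n) + \<gamma> * real n * (h 1 - m) / 2"
  proof -
    have "(\<Sum>j = 1..n - 1. w j) = \<gamma> * (real n - 1)"
      unfolding w_def using assms(2) by (intro sum_fragmentation_rates) simp
    then have "(\<Sum>j = 1..n - 1. w j * (2 * m - h n)) = \<gamma> * (real n - 1) * (2 * m - h n)"
      by (simp add: sum_distrib_right[symmetric])
    moreover have "(\<Sum>j = 1..n - 1. if j = 1 then w j * (h 1 - m) else 0) = w 1 * (h 1 - m)"
      using assms(2) by (auto simp: sum.delta)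
    ultimately show ?thesis by (simp add: sum.distrib w_def)
  qed
  ultimately show ?thesis
    unfolding mgfi_gen_def w_def by (simp add: algebra_simps)
qed

lemma mgfi_gen_critical_minimum_principle:
  assumes "\<beta> > 0" "\<gamma> > 0" and bdd: "bdd_below (h ` {1..})"
    and super: "\<And>n. n \<ge> 1 \<Longrightarrow> mgfi_gen \<beta> \<gamma> \<gamma> h n \<le> 0" and "k \<ge> 1"
  shows "h 1 \<le> h k"
proof (rule ccontr)
  define m where "m = (INF n\<in>{1..}. h n)"
  have lower: "m \<le> h n" if "n \<ge> 1" for n
    unfolding m_def using bdd that by (auto intro: cINF_lower)
  assume "\<not> h 1 \<le> h k"
  with lower[OF \<open>k \<ge> 1\<close>] have gap: "h 1 - m > 0" by simp
  define e where "e = \<gamma> * (h 1 - m) / (2 * (\<beta> + 2 * \<gamma>))"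
  have "e > 0" using assms(1,2) gap unfolding e_def by simp
  have "\<gamma> * (h 1 - m) < (2 * (\<beta> + 2 * \<gamma>)) * (h 1 - m)"
    using assms(1,2) gap by (intro mult_strict_right_mono) auto
  then have "e < h 1 - m"
    using assms(1,2) unfolding e_def by (simp add: pos_divide_less_eq mult.commute)
  obtain n where "n \<ge> 1" and near_inf: "h n < m + e"
    using cINF_less_iff[OF _ bdd, of "m + e"] \<open>e > 0\<close> unfolding m_def by auto
  with \<open>e < h 1 - m\<close> have "n \<ge> 2" by (cases "n = 1") auto
  have "\<beta> * real n * (h (n + 1) - h n) + 2 * \<gamma> * (real n - 1) * (m - h n)
      + \<gamma> * real n * (h 1 - m) / 2 \<le> 0"
    using mgfi_gen_critical_lower_bound[of \<gamma> n m h \<beta>] super[of n] assms(2) \<open>n \<ge> 2\<close> lower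
    by force
  moreover have "2 * \<gamma> * real n * (m - h n) \<le> 2 * \<gamma> * (real n - 1) * (m - h n)"
    using lower[OF \<open>n \<ge> 1\<close>] assms(2) by (simp add: algebra_simps)
  ultimately have "real n * (\<beta> * (h (n + 1) - h n) + 2 * \<gamma> * (m - h n) + \<gamma> * (h 1 - m) / 2) \<le> 0"
    by (simp add: algebra_simps)
  then have "\<beta> * (h (n + 1) - h n) + 2 * \<gamma> * (m - h n) + \<gamma> * (h 1 - m) / 2 \<le> 0"
    using \<open>n \<ge> 1\<close> by (simp add: mult_le_0_iff)
  moreover have "(\<beta> + 2 * \<gamma>) * (h n - m) < \<gamma> * (h 1 - m) / 2"
  proof -
    have "(\<beta> + 2 * \<gamma>) * (h n - m) < (\<beta> + 2 * \<gamma>) * e"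
      using near_inf assms(1,2) by simp
    also have "\<dots> = \<gamma> * (h 1 - m) / 2"
      using assms(1,2) unfolding e_def by (simp add: field_simps add_pos_pos)
    finally show ?thesis .
  qed
  moreover have "\<beta> * (h (n + 1) - m)
      = (\<beta> * (h (n + 1) - h n) + 2 * \<gamma> * (m - h n) + \<gamma> * (h 1 - m) / 2)
        + ((\<beta> + 2 * \<gamma>) * (h n - m) - \<gamma> * (h 1 - m) / 2)"
    by (simp add: algebra_simps)
  ultimately have "\<beta> * (h (n + 1) - m) < 0" by linarith
  with assms(1) have "h (n + 1) < m" by (simp add: mult_less_0_iff)
  with lower[of "n + 1"] show False by simp
qed

lemma mgfi_gen_critical_maximum_principle:
  assumes "\<beta> > 0" "\<gamma> > 0" and bdd: "bdd_above (h ` {1..})"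
    and sub: "\<And>n. n \<ge> 1 \<Longrightarrow> mgfi_gen \<beta> \<gamma> \<gamma> h n \<ge> 0" and "k \<ge> 1"
  shows "h k \<le> h 1"
proof -
  have "bdd_below ((\<lambda>n. - h n) ` {1..})"
    using bdd by (simp add: image_image[symmetric])
  then have "- h 1 \<le> - h k"
    using mgfi_gen_critical_minimum_principle[OF assms(1,2), of "\<lambda>n. - h n"] sub \<open>k \<ge> 1\<close>
    by (simp add: mgfi_gen_uminus)
  then show ?thesis by simp
qed

lemma nonpos_eigenvalue_imp_critical:
  assumes "\<beta> > 0" "\<gamma> > 0" "\<theta> \<le> \<gamma>" "lam \<le> 0"
    and pos: "\<And>n. n \<ge> 1 \<Longrightarrow> 0 < h n" and bdd: "bdd_below (h ` {1..})"
    and eigen: "\<And>n. n \<ge> 1 \<Longrightarrow> mgfi_gen \<beta> \<theta> \<gamma> h n = lam * h n"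
  shows "lam = 0 \<and> \<theta> = \<gamma>"
proof -
  have "mgfi_gen \<beta> \<gamma> \<gamma> h n \<le> 0" if "n \<ge> 1" for n
  proof -
    have "mgfi_gen \<beta> \<gamma> \<gamma> h n = (lam - (\<gamma> - \<theta>) * (real n - 1)) * h n"
      using eigen[OF that] mgfi_gen_change_detection[of \<beta> \<theta> \<gamma> h n \<gamma>] by (simp add: algebra_simps)
    moreover have "(\<gamma> - \<theta>) * (real n - 1) \<ge> 0"
      using assms(3) that by simp
    ultimately show ?thesis
      using assms(4) pos[OF that] by (simp add: mult_nonpos_nonneg)
  qed
  then have min: "h 1 \<le> h k" if "k \<ge> 1" for k
    using mgfi_gen_critical_minimum_principle[OF assms(1,2) bdd] that by blast
  have eq1: "lam * h 1 = \<beta> * (h 2 - h 1)"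
    using eigen[of 1] mgfi_gen_at_1[of \<beta> \<theta> \<gamma> h] by simp
  moreover have "\<beta> * (h 2 - h 1) \<ge> 0"
    using min[of 2] assms(1) by simp
  ultimately have "lam * h 1 = 0"
    using assms(4) pos[of 1] mult_nonpos_nonneg[of lam "h 1"] by linarith
  with eq1 have "lam = 0" "h 2 = h 1"
    using assms(1) pos[of 1] by auto
  then have "(\<gamma> - \<theta>) * h 1 = - 2 * \<beta> * (h 3 - h 1)"
    using eigen[of 2] mgfi_gen_at_2[of \<beta> \<theta> \<gamma> h] by (simp add: algebra_simps)
  also have "\<dots> \<le> 0"
    using min[of 3] assms(1) by simp
  finally have "\<gamma> \<le> \<theta>"
    using pos[of 1] by (simp add: mult_le_0_iff)
  with \<open>lam = 0\<close> assms(3) show ?thesis by simp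
qed

lemma nonneg_eigenvalue_imp_critical:
  assumes "\<beta> > 0" "\<gamma> > 0" "\<gamma> \<le> \<theta>" "lam \<ge> 0"
    and pos: "\<And>n. n \<ge> 1 \<Longrightarrow> 0 < h n" and bdd: "bdd_above (h ` {1..})"
    and eigen: "\<And>n. n \<ge> 1 \<Longrightarrow> mgfi_gen \<beta> \<theta> \<gamma> h n = lam * h n"
  shows "lam = 0 \<and> \<theta> = \<gamma>"
proof -
  have "mgfi_gen \<beta> \<gamma> \<gamma> h n \<ge> 0" if "n \<ge> 1" for n
  proof -
    have "mgfi_gen \<beta> \<gamma> \<gamma> h n = (lam + (\<theta> - \<gamma>) * (real n - 1)) * h n"
      using eigen[OF that] mgfi_gen_change_detection[of \<beta> \<theta> \<gamma> h n \<gamma>] by (simp add: algebra_simps)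
    moreover have "lam + (\<theta> - \<gamma>) * (real n - 1) \<ge> 0"
      using assms(3,4) that by simp
    ultimately show ?thesis
      using pos[OF that] by simp
  qed
  then have max: "h k \<le> h 1" if "k \<ge> 1" for k
    using mgfi_gen_critical_maximum_principle[OF assms(1,2) bdd] that by blast
  have eq1: "lam * h 1 = \<beta> * (h 2 - h 1)"
    using eigen[of 1] mgfi_gen_at_1[of \<beta> \<theta> \<gamma> h] by simp
  moreover have "\<beta> * (h 2 - h 1) \<le> 0"
    using max[of 2] assms(1) by (simp add: mult_le_0_iff)
  ultimately have "lam * h 1 = 0"
    using assms(4) pos[of 1] mult_nonneg_nonneg[of lam "h 1"] by linarith
  with eq1 have "lam = 0" "h 2 = h 1"
    using assms(1) pos[of 1] by auto
  then have "(\<theta> - \<gamma>) * h 1 = 2 * \<beta> * (h 3 - h 1)"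
    using eigen[of 2] mgfi_gen_at_2[of \<beta> \<theta> \<gamma> h] by (simp add: algebra_simps)
  also have "\<dots> \<le> 0"
    using max[of 3] assms(1) by (simp add: mult_le_0_iff)
  finally have "\<theta> \<le> \<gamma>"
    using pos[of 1] by (simp add: mult_le_0_iff)
  with \<open>lam = 0\<close> assms(3) show ?thesis by simp
qed

theorem lemma6p7:
  fixes \<beta> \<theta> \<gamma> lam :: real
  assumes "\<beta> > 0" "\<theta> > 0" "\<gamma> > 0"
    and "is_perron_root \<beta> \<theta> \<gamma> lam"
  shows "(\<gamma> > \<theta> \<longrightarrow> lam > 0) \<and> (\<gamma> = \<theta> \<longrightarrow> lam = 0) \<and> (\<gamma> < \<theta> \<longrightarrow> lam < 0)"
proof -
  obtain h :: "nat \<Rightarrow> real" and c C where "0 < c" and bounds: "\<And>n. n \<ge> 1 \<Longrightarrow> c \<le> h n \<and> h n \<le> C"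
    and eigen: "\<And>n. n \<ge> 1 \<Longrightarrow> mgfi_gen \<beta> \<theta> \<gamma> h n = lam * h n"
    using assms(4) unfolding is_perron_root_def by blast
  have pos: "\<And>n. n \<ge> 1 \<Longrightarrow> 0 < h n"
    using \<open>0 < c\<close> bounds by (meson less_le_trans)
  have "bdd_below (h ` {1..})" "bdd_above (h ` {1..})"
    using bounds by (meson atLeast_iff bdd_belowI2 bdd_aboveI2)+
  then have "lam \<le> 0 \<Longrightarrow> \<theta> \<le> \<gamma> \<Longrightarrow> lam = 0 \<and> \<theta> = \<gamma>"
    and "0 \<le> lam \<Longrightarrow> \<gamma> \<le> \<theta> \<Longrightarrow> lam = 0 \<and> \<theta> = \<gamma>"
    using nonpos_eigenvalue_imp_critical[OF assms(1,3) _ _ pos _ eigen]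
      nonneg_eigenvalue_imp_critical[OF assms(1,3) _ _ pos _ eigen]
    by blast+
  then show ?thesis by force
qed

end
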